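(* Let $\varphi\in\mathcal L$ be falsifiable (on some bi-relational model) and let $\Sigma$ be the set of subformulas of $\varphi$. Then $\varphi$ is falsified (i.e. $\varphi\notin\ell(w)$ for some world $w$) in some ultimately periodic $\Sigma$-quasimodel of height at most $|\Sigma|+1$.
   Context: $\mathcal L$: formulas with $\wedge,\vee,\Rightarrow,\Leftarrow,\mathsf X,\mathsf Y,\mathsf G,\mathsf H,\mathsf U,\mathsf S$. Bi-relational model: $(W,T,\le,S,[\![\cdot]\!])$ with $(W,\le)$ linear, $S$ a bijection on $T$, $[\![p]\!]$ downward closed in the first coordinate, Kripke clauses ($\Rightarrow$ looks at all $v\le w$, $\Leftarrow$ at some $v\ge w$ with $\varphi$ true and $\psi$ false) and linear-time clauses along $S$; falsifiable means $[\![\varphi]\!]\ne W\times T$ in some model. For subformula-closed $\Sigma$: a $\Sigma$-type is $\Phi\subseteq\Sigma$ with Boolean closure for $\wedge,\vee$, ($\varphi\Rightarrow\psi\in\Phi$ implies $\varphi\notin\Phi$ or $\psi\in\Phi$; $\psi\in\Phi$ implies $\varphi\Rightarrow\psi\in\Phi$), ($\varphi\Leftarrow\psi\in\Phi$ implies $\varphi\in\Phi$; $\varphi\in\Phi,\psi\notin\Phi$ imply $\varphi\Leftarrow\psi\in\Phi$). A $\Sigma$-labelled space is $(W,\le,\ell)$, $(W,\le)$ a disjoint union of linear posets (its linear components), $\ell$ into $\Sigma$-types, $w\le v\Rightarrow\ell(w)\supseteq\ell(v)$, with $\Rightarrow$-formulas outside $\ell(w)$ witnessed at some $v\le w$ and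 $\Leftarrow$-formulas in $\ell(w)$ witnessed at some $v\ge w$. A relation $R$ is convex (images/preimages of points convex), fully confluent (forth–down: $x\le x'Ry'\Rightarrow\exists y\,xRy\le y'$; forth–up: $x'\ge xRy\Rightarrow\exists y'\,x'Ry'\ge y$; back–down: $x'Ry'\ge y\Rightarrow\exists x\,x'\ge xRy$; back–up: $xRy\le y'\Rightarrow\exists x'\,x\le x'Ry'$), bi-serial, and sensible (for each $wRv$ and formulas in $\Sigma$: $\mathsf X\varphi\in\ell(w)\iff\varphi\in\ell(v)$; $\mathsf Y\varphi\in\ell(v)\iff\varphi\in\ell(w)$; $\mathsf G\varphi\in\ell(w)\iff\varphi\in\ell(w)\wedge\mathsf G\varphi\in\ell(v)$; $\mathsf H\varphi\in\ell(v)\iff\varphi\in\ell(v)\wedge\mathsf H\varphi\in\ell(w)$; $\varphi\,\mathsf U\,\psi\in\ell(w)\iff\psi\in\ell(w)\vee(\varphi\in\ell(w)\wedge\varphi\,\mathsf U\,\psi\in\ell(v))$; $\varphi\,\mathsf S\,\psi\in\ell(v)\iff\psi\in\ell(v)\vee(\varphi\in\ell(v)\wedge\varphi\,\mathsf S\,\psi\in\ell(w))$), and $\omega$-sensible ($\mathsf G\varphi\in\Sigma\setminus\ell(w)$ gives $v$ with $wR^nv$, $\varphi\notin\ell(v)$; $\mathsf H\varphi\in\Sigma\setminus\ell(w)$ gives $v$ with $vR^nw$, $\varphi\notin\ell(v)$; $\varphi\,\mathsf U\,\psi\in\ell(w)$ gives $v$ with $wR^nv$, $\psi\in\ell(v)$;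 $\varphi\,\mathsf S\,\psi\in\ell(w)$ gives $v$ with $vR^nw$, $\psi\in\ell(v)$; $n\ge0$). A $\Sigma$-quasimodel is a $\Sigma$-labelled space with a bi-serial, fully confluent, convex, sensible, $\omega$-sensible relation. Height: supremum of $n$ with a chain $w_1<\dots<w_n$. An ultimately periodic $\Sigma$-quasimodel is a $\Sigma$-quasimodel $(W,\le,\ell,R)$ for which there exist integers $i,i'\ge0$, $l,l'\ge1$ and a map $\pi\colon W\to T:=\{-(i'+l'-1),\dots,i+l-1\}$ such that each fibre $\pi^{-1}(t)$ is exactly one linear component of $W$, and $wRv$ implies $\pi(w)R_T\pi(v)$, where $R_T$ consists of the pairs $(k,k+1)$ for $-(i'+l'-1)\le k\le i+l-2$ together with $(i+l-1,i)$ and $(-i',-(i'+l'-1))$ (a "double lasso": a middle segment through $0$ with a loop at each end). *)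

theory Defs
  imports Main
begin

datatype 'a fm =
    Atom 'a
  | And "'a fm" "'a fm"
  | Or "'a fm" "'a fm"
  | Imp "'a fm" "'a fm"
  | Coimp "'a fm" "'a fm"
  | Next "'a fm"
  | Prev "'a fm"
  | Always "'a fm"
  | Hist "'a fm"
  | Until "'a fm" "'a fm"
  | Since "'a fm" "'a fm"

fun subf :: "'a fm \<Rightarrow> 'a fm set" where
  "subf (Atom p) = {Atom p}"
| "subf (And a b) = insert (And a b) (subf a \<union> subf b)"
| "subf (Or a b) = insert (Or a b) (subf a \<union> subf b)"
| "subf (Imp a b) = insert (Imp a b) (subf a \<union> subf b)"
| "subf (Coimp a b) = insert (Coimp a b) (subf a \<union> subf b)"
| "subf (Next a) = insert (Next a) (subf a)"
| "subf (Prev a) = insert (Prev a) (subf a)"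
| "subf (Always a) = insert (Always a) (subf a)"
| "subf (Hist a) = insert (Hist a) (subf a)"
| "subf (Until a b) = insert (Until a b) (subf a \<union> subf b)"
| "subf (Since a b) = insert (Since a b) (subf a \<union> subf b)"

record ('a, 'w, 't) bimodel =
  wor :: "'w set"
  mle :: "'w \<Rightarrow> 'w \<Rightarrow> bool"
  tim :: "'t set"
  suc :: "'t \<Rightarrow> 't"
  val :: "'a \<Rightarrow> ('w \<times> 't) set"

definition is_bimodel :: "('a, 'w, 't) bimodel \<Rightarrow> bool" where
  "is_bimodel M \<longleftrightarrow>
     (\<forall>w\<in>wor M. mle M w w) \<and>
     (\<forall>w\<in>wor M. \<forall>v\<in>wor M. mle M w v \<and> mle M v w \<longrightarrow> w = v) \<and>
     (\<forall>u\<in>wor M. \<forall>w\<in>wor M. \<forall>v\<in>wor M. mle M u w \<and> mle M w v \<longrightarrow> mle M u v) \<and>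
     (\<forall>w\<in>wor M. \<forall>v\<in>wor M. mle M w v \<or> mle M v w) \<and>
     bij_betw (suc M) (tim M) (tim M) \<and>
     (\<forall>p. val M p \<subseteq> wor M \<times> tim M \<and>
          (\<forall>w v t. (w, t) \<in> val M p \<longrightarrow> v \<in> wor M \<longrightarrow> mle M v w \<longrightarrow> (v, t) \<in> val M p))"

abbreviation pre :: "('a, 'w, 't) bimodel \<Rightarrow> 't \<Rightarrow> 't" where
  "pre M \<equiv> inv_into (tim M) (suc M)"

fun sat :: "('a, 'w, 't) bimodel \<Rightarrow> 'w \<Rightarrow> 't \<Rightarrow> 'a fm \<Rightarrow> bool" where
  "sat M w t (Atom p) = ((w, t) \<in> val M p)"
| "sat M w t (And a b) = (sat M w t a \<and> sat M w t b)"
| "sat M w t (Or a b) = (sat M w t a \<or> sat M w t b)"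
| "sat M w t (Imp a b) = (\<forall>v\<in>wor M. mle M v w \<longrightarrow> sat M v t a \<longrightarrow> sat M v t b)"
| "sat M w t (Coimp a b) = (\<exists>v\<in>wor M. mle M w v \<and> sat M v t a \<and> \<not> sat M v t b)"
| "sat M w t (Next a) = sat M w (suc M t) a"
| "sat M w t (Prev a) = sat M w (pre M t) a"
| "sat M w t (Always a) = (\<forall>n. sat M w ((suc M ^^ n) t) a)"
| "sat M w t (Hist a) = (\<forall>n. sat M w ((pre M ^^ n) t) a)"
| "sat M w t (Until a b) =
     (\<exists>n. sat M w ((suc M ^^ n) t) b \<and> (\<forall>k<n. sat M w ((suc M ^^ k) t) a))"
| "sat M w t (Since a b) =
     (\<exists>n. sat M w ((pre M ^^ n) t) b \<and> (\<forall>k<n. sat M w ((pre M ^^ k) t) a))"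

definition falsifiable_in :: "('a, 'w, 't) bimodel \<Rightarrow> 'a fm \<Rightarrow> bool" where
  "falsifiable_in M \<phi> \<longleftrightarrow> is_bimodel M \<and> (\<exists>w\<in>wor M. \<exists>t\<in>tim M. \<not> sat M w t \<phi>)"

definition is_type :: "'a fm set \<Rightarrow> 'a fm set \<Rightarrow> bool" where
  "is_type \<Sigma> \<Phi> \<longleftrightarrow> \<Phi> \<subseteq> \<Sigma> \<and>
     (\<forall>a b. And a b \<in> \<Sigma> \<longrightarrow> (And a b \<in> \<Phi> \<longleftrightarrow> a \<in> \<Phi> \<and> b \<in> \<Phi>)) \<and>
     (\<forall>a b. Or a b \<in> \<Sigma> \<longrightarrow> (Or a b \<in> \<Phi> \<longleftrightarrow> a \<in> \<Phi> \<or> b \<in> \<Phi>)) \<and>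
     (\<forall>a b. Imp a b \<in> \<Phi> \<longrightarrow> a \<notin> \<Phi> \<or> b \<in> \<Phi>) \<and>
     (\<forall>a b. Imp a b \<in> \<Sigma> \<longrightarrow> b \<in> \<Phi> \<longrightarrow> Imp a b \<in> \<Phi>) \<and>
     (\<forall>a b. Coimp a b \<in> \<Phi> \<longrightarrow> a \<in> \<Phi>) \<and>
     (\<forall>a b. Coimp a b \<in> \<Sigma> \<longrightarrow> a \<in> \<Phi> \<longrightarrow> b \<notin> \<Phi> \<longrightarrow> Coimp a b \<in> \<Phi>)"

definition lt_in :: "(nat \<times> nat) set \<Rightarrow> nat \<Rightarrow> nat \<Rightarrow> bool" where
  "lt_in le x y \<longleftrightarrow> (x, y) \<in> le \<and> x \<noteq> y"

definition component :: "nat set \<Rightarrow> (nat \<times> nat) set \<Rightarrow> nat \<Rightarrow> nat set" where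
  "component W le w = {v \<in> W. (w, v) \<in> le \<or> (v, w) \<in> le}"

definition disjoint_union_of_linear :: "nat set \<Rightarrow> (nat \<times> nat) set \<Rightarrow> bool" where
  "disjoint_union_of_linear W le \<longleftrightarrow>
     le \<subseteq> W \<times> W \<and>
     (\<forall>w\<in>W. (w, w) \<in> le) \<and>
     (\<forall>w\<in>W. \<forall>v\<in>W. (w, v) \<in> le \<and> (v, w) \<in> le \<longrightarrow> w = v) \<and>
     (\<forall>u\<in>W. \<forall>w\<in>W. \<forall>v\<in>W. (u, w) \<in> le \<and> (w, v) \<in> le \<longrightarrow> (u, v) \<in> le) \<and>
     (\<forall>u\<in>W. \<forall>w\<in>W. \<forall>v\<in>W. v \<in> component W le w \<and> u \<in> component W le w
          \<longrightarrow> u \<in> component W le v)"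

definition labelled_space ::
  "'a fm set \<Rightarrow> nat set \<Rightarrow> (nat \<times> nat) set \<Rightarrow> (nat \<Rightarrow> 'a fm set) \<Rightarrow> bool" where
  "labelled_space \<Sigma> W le lab \<longleftrightarrow>
     disjoint_union_of_linear W le \<and>
     (\<forall>w\<in>W. is_type \<Sigma> (lab w)) \<and>
     (\<forall>w v. (w, v) \<in> le \<longrightarrow> lab v \<subseteq> lab w) \<and>
     (\<forall>w\<in>W. \<forall>a b. Imp a b \<in> \<Sigma> \<longrightarrow> Imp a b \<notin> lab w \<longrightarrow>
        (\<exists>v\<in>W. (v, w) \<in> le \<and> a \<in> lab v \<and> b \<notin> lab v)) \<and>
     (\<forall>w\<in>W. \<forall>a b. Coimp a b \<in> lab w \<longrightarrow>
        (\<exists>v\<in>W. (w, v) \<in> le \<and> a \<in> lab v \<and> b \<notin> lab v))"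

definition convex_set :: "(nat \<times> nat) set \<Rightarrow> nat set \<Rightarrow> bool" where
  "convex_set le A \<longleftrightarrow> (\<forall>x\<in>A. \<forall>y\<in>A. \<forall>z. (x, z) \<in> le \<and> (z, y) \<in> le \<longrightarrow> z \<in> A)"

definition convex_rel :: "(nat \<times> nat) set \<Rightarrow> (nat \<times> nat) set \<Rightarrow> bool" where
  "convex_rel le R \<longleftrightarrow> (\<forall>x. convex_set le (R `` {x}) \<and> convex_set le (R\<inverse> `` {x}))"

definition fully_confluent :: "(nat \<times> nat) set \<Rightarrow> (nat \<times> nat) set \<Rightarrow> bool" where
  "fully_confluent le R \<longleftrightarrow>
     (\<forall>x x' y'. (x, x') \<in> le \<and> (x', y') \<in> R \<longrightarrow> (\<exists>y. (x, y) \<in> R \<and> (y, y') \<in> le)) \<and>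
     (\<forall>x x' y. (x, x') \<in> le \<and> (x, y) \<in> R \<longrightarrow> (\<exists>y'. (x', y') \<in> R \<and> (y, y') \<in> le)) \<and>
     (\<forall>x' y' y. (x', y') \<in> R \<and> (y, y') \<in> le \<longrightarrow> (\<exists>x. (x, x') \<in> le \<and> (x, y) \<in> R)) \<and>
     (\<forall>x y y'. (x, y) \<in> R \<and> (y, y') \<in> le \<longrightarrow> (\<exists>x'. (x, x') \<in> le \<and> (x', y') \<in> R))"

definition bi_serial :: "nat set \<Rightarrow> (nat \<times> nat) set \<Rightarrow> bool" where
  "bi_serial W R \<longleftrightarrow> (\<forall>w\<in>W. (\<exists>v. (w, v) \<in> R) \<and> (\<exists>v. (v, w) \<in> R))"

definition sensible :: "'a fm set \<Rightarrow> (nat \<Rightarrow> 'a fm set) \<Rightarrow> (nat \<times> nat) set \<Rightarrow> bool" where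
  "sensible \<Sigma> lab R \<longleftrightarrow> (\<forall>w v. (w, v) \<in> R \<longrightarrow>
     (\<forall>a. Next a \<in> \<Sigma> \<longrightarrow> (Next a \<in> lab w \<longleftrightarrow> a \<in> lab v)) \<and>
     (\<forall>a. Prev a \<in> \<Sigma> \<longrightarrow> (Prev a \<in> lab v \<longleftrightarrow> a \<in> lab w)) \<and>
     (\<forall>a. Always a \<in> \<Sigma> \<longrightarrow> (Always a \<in> lab w \<longleftrightarrow> a \<in> lab w \<and> Always a \<in> lab v)) \<and>
     (\<forall>a. Hist a \<in> \<Sigma> \<longrightarrow> (Hist a \<in> lab v \<longleftrightarrow> a \<in> lab v \<and> Hist a \<in> lab w)) \<and>
     (\<forall>a b. Until a b \<in> \<Sigma> \<longrightarrow>
        (Until a b \<in> lab w \<longleftrightarrow> b \<in> lab w \<or> (a \<in> lab w \<and> Until a b \<in> lab v))) \<and>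
     (\<forall>a b. Since a b \<in> \<Sigma> \<longrightarrow>
        (Since a b \<in> lab v \<longleftrightarrow> b \<in> lab v \<or> (a \<in> lab v \<and> Since a b \<in> lab w))))"

definition omega_sensible ::
  "'a fm set \<Rightarrow> nat set \<Rightarrow> (nat \<Rightarrow> 'a fm set) \<Rightarrow> (nat \<times> nat) set \<Rightarrow> bool" where
  "omega_sensible \<Sigma> W lab R \<longleftrightarrow> (\<forall>w\<in>W.
     (\<forall>a. Always a \<in> \<Sigma> \<longrightarrow> Always a \<notin> lab w \<longrightarrow>
        (\<exists>n v. (w, v) \<in> R ^^ n \<and> a \<notin> lab v)) \<and>
     (\<forall>a. Hist a \<in> \<Sigma> \<longrightarrow> Hist a \<notin> lab w \<longrightarrow>
        (\<exists>n v. (v, w) \<in> R ^^ n \<and> a \<notin> lab v)) \<and>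
     (\<forall>a b. Until a b \<in> lab w \<longrightarrow> (\<exists>n v. (w, v) \<in> R ^^ n \<and> b \<in> lab v)) \<and>
     (\<forall>a b. Since a b \<in> lab w \<longrightarrow> (\<exists>n v. (v, w) \<in> R ^^ n \<and> b \<in> lab v)))"

definition quasimodel ::
  "'a fm set \<Rightarrow> nat set \<Rightarrow> (nat \<times> nat) set \<Rightarrow> (nat \<Rightarrow> 'a fm set) \<Rightarrow> (nat \<times> nat) set \<Rightarrow> bool" where
  "quasimodel \<Sigma> W le lab R \<longleftrightarrow>
     labelled_space \<Sigma> W le lab \<and> R \<subseteq> W \<times> W \<and>
     bi_serial W R \<and> fully_confluent le R \<and> convex_rel le R \<and>
     sensible \<Sigma> lab R \<and> omega_sensible \<Sigma> W lab R"

definition height_le :: "nat set \<Rightarrow> (nat \<times> nat) set \<Rightarrow> nat \<Rightarrow> bool" where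
  "height_le W le k \<longleftrightarrow>
     (\<forall>xs. set xs \<subseteq> W \<and> sorted_wrt (lt_in le) xs \<longrightarrow> length xs \<le> k)"

definition lasso_rel :: "nat \<Rightarrow> nat \<Rightarrow> nat \<Rightarrow> nat \<Rightarrow> (int \<times> int) set" where
  "lasso_rel i i' l l' =
     {(k, k + 1) | k. - (int i' + int l' - 1) \<le> k \<and> k \<le> int i + int l - 2}
     \<union> {(int i + int l - 1, int i), (- int i', - (int i' + int l' - 1))}"

definition ultimately_periodic ::
  "'a fm set \<Rightarrow> nat set \<Rightarrow> (nat \<times> nat) set \<Rightarrow> (nat \<Rightarrow> 'a fm set) \<Rightarrow> (nat \<times> nat) set \<Rightarrow> bool" where
  "ultimately_periodic \<Sigma> W le lab R \<longleftrightarrow>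
     quasimodel \<Sigma> W le lab R \<and>
     (\<exists>(i::nat) (i'::nat) (l::nat) (l'::nat) (\<pi>::nat \<Rightarrow> int).
        l \<ge> 1 \<and> l' \<ge> 1 \<and>
        (\<forall>w\<in>W. \<pi> w \<in> {- (int i' + int l' - 1) .. int i + int l - 1}) \<and>
        (\<forall>t\<in>{- (int i' + int l' - 1) .. int i + int l - 1}. \<exists>w\<in>W. \<pi> w = t) \<and>
        (\<forall>w\<in>W. {v \<in> W. \<pi> v = \<pi> w} = component W le w) \<and>
        (\<forall>w v. (w, v) \<in> R \<longrightarrow> (\<pi> w, \<pi> v) \<in> lasso_rel i i' l l'))"

end

theory Submission
  imports Defs
begin

text \<open>Fix a world and a moment where \<open>\<phi>\<close> fails and index the orbit of that moment by the
  integers. At each time the types (sets of subformulas true at a world) form a chain under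
  inclusion. As there are finitely many sets of types, a pigeonhole argument yields windows
  \<open>0 \<le> A \<le> B\<close> and \<open>C < E \<le> 0\<close> such that time \<open>B + 1\<close> carries the same types as \<open>A\<close>, time \<open>C\<close>
  the same as \<open>E\<close>, and every type at \<open>A\<close> (resp. \<open>E\<close>) is realised by a world that fulfils all
  its pending future (resp. past) eventualities inside the window. The quasimodel has one point
  per type occurring at a time in \<open>[C, B]\<close>, ordered by reverse inclusion, with \<open>R\<close> linking
  types realised by one world at consecutive times and two back edges closing the lasso.
  Linearity of the model gives confluence and convexity, the windows give \<open>\<omega>\<close>-sensibility,
  and strict chains shrink the type, so the height is at most \<open>|\<Sigma>| + 1\<close>.\<close>

lemma subf_refl [simp]: "\<psi> \<in> subf \<psi>"
  by (cases \<psi>) auto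

lemma subf_trans: "\<psi> \<in> subf \<phi> \<Longrightarrow> \<chi> \<in> subf \<psi> \<Longrightarrow> \<chi> \<in> subf \<phi>"
  by (induction \<phi>) auto

lemma finite_subf: "finite (subf \<phi>)"
  by (induction \<phi>) auto

lemma subf_closed:
  "And a b \<in> subf \<phi> \<Longrightarrow> a \<in> subf \<phi> \<and> b \<in> subf \<phi>"
  "Or a b \<in> subf \<phi> \<Longrightarrow> a \<in> subf \<phi> \<and> b \<in> subf \<phi>"
  "Imp a b \<in> subf \<phi> \<Longrightarrow> a \<in> subf \<phi> \<and> b \<in> subf \<phi>"
  "Coimp a b \<in> subf \<phi> \<Longrightarrow> a \<in> subf \<phi> \<and> b \<in> subf \<phi>"
  "Until a b \<in> subf \<phi> \<Longrightarrow> a \<in> subf \<phi> \<and> b \<in> subf \<phi>"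
  "Since a b \<in> subf \<phi> \<Longrightarrow> a \<in> subf \<phi> \<and> b \<in> subf \<phi>"
  "Next a \<in> subf \<phi> \<Longrightarrow> a \<in> subf \<phi>"
  "Prev a \<in> subf \<phi> \<Longrightarrow> a \<in> subf \<phi>"
  "Always a \<in> subf \<phi> \<Longrightarrow> a \<in> subf \<phi>"
  "Hist a \<in> subf \<phi> \<Longrightarrow> a \<in> subf \<phi>"
  by (auto intro: subf_trans)

lemma all_funpow_unfold: "(\<forall>n. P ((f ^^ n) t)) \<longleftrightarrow> P t \<and> (\<forall>n. P ((f ^^ n) (f t)))"
  by (metis funpow_0 funpow_Suc_right not0_implies_Suc o_apply)

lemma ex_until_funpow_unfold:
  "(\<exists>n. Q ((f ^^ n) t) \<and> (\<forall>k<n. P ((f ^^ k) t))) \<longleftrightarrow>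
   Q t \<or> (P t \<and> (\<exists>n. Q ((f ^^ n) (f t)) \<and> (\<forall>k<n. P ((f ^^ k) (f t)))))"
  (is "?lhs \<longleftrightarrow> ?rhs")
proof
  assume ?lhs
  then obtain n where n: "Q ((f ^^ n) t)" "\<forall>k<n. P ((f ^^ k) t)" by blast
  show ?rhs
  proof (cases n)
    case (Suc m)
    then show ?thesis using n by (auto simp: funpow_swap1 intro!: exI[of _ m])
  qed (use n in simp)
next
  assume ?rhs
  then show ?lhs
  proof (elim disjE conjE exE)
    fix n assume "P t" "Q ((f ^^ n) (f t))" "\<forall>k<n. P ((f ^^ k) (f t))"
    then show ?lhs
      by (intro exI[of _ "Suc n"]) (auto simp: funpow_swap1 less_Suc_eq_0_disj)
  qed (auto intro: exI[of _ 0])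
qed

lemma recurrent_window:
  fixes f :: "nat \<Rightarrow> 'b"
  assumes "finite (range f)" and "\<And>a. \<forall>\<^sub>F m in sequentially. P a m"
  shows "\<exists>a b. a < b \<and> f a = f b \<and> P a (b - Suc a)"
proof -
  obtain y where "infinite (f -` {y})"
    using inf_img_fin_domE[OF assms(1) infinite_UNIV_nat] by blast
  then have y: "\<forall>N. \<exists>n\<ge>N. f n = y"
    using frequently_cofinite[of "\<lambda>n. f n = y"]
    by (simp add: cofinite_eq_sequentially frequently_sequentially vimage_def)
  then obtain a where a: "f a = y" by blast
  obtain N where N: "\<forall>m\<ge>N. P a m" using assms(2)[of a] eventually_sequentially by blast
  obtain b where "b \<ge> Suc (a + N)" "f b = y" using y by blast
  then show ?thesis using a N by (intro exI[of _ a] exI[of _ b]) auto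
qed

lemma length_le_by_strictly_decreasing:
  assumes "sorted_wrt (\<lambda>a b. f b < (f a :: nat)) xs" and "\<forall>x\<in>set xs. f x \<le> N"
  shows "length xs \<le> Suc N"
proof -
  have "distinct (map f xs)"
    using assms(1) by (induction xs) auto
  then have "length xs = card (f ` set xs)"
    by (metis distinct_card length_map set_map)
  also have "\<dots> \<le> card {..N}"
    using assms(2) by (intro card_mono) auto
  finally show ?thesis by simp
qed

section \<open>Types along the time line\<close>

locale pointed_bimodel =
  fixes M :: "('a, 'w, 't) bimodel" and t0 :: 't
  assumes bimodel: "is_bimodel M" and t0: "t0 \<in> tim M"
begin

lemma mle_refl: "w \<in> wor M \<Longrightarrow> mle M w w"
  using bimodel unfolding is_bimodel_def by blast

lemma mle_trans:
  "u \<in> wor M \<Longrightarrow> w \<in> wor M \<Longrightarrow> v \<in> wor M \<Longrightarrow> mle M u w \<Longrightarrow> mle M w v \<Longrightarrow> mle M u v"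
  using bimodel unfolding is_bimodel_def by blast

lemma mle_linear: "w \<in> wor M \<Longrightarrow> v \<in> wor M \<Longrightarrow> mle M w v \<or> mle M v w"
  using bimodel unfolding is_bimodel_def by blast

lemma val_downward_closed:
  "(w, t) \<in> val M p \<Longrightarrow> v \<in> wor M \<Longrightarrow> mle M v w \<Longrightarrow> (v, t) \<in> val M p"
  using bimodel unfolding is_bimodel_def by blast

lemma bij_suc: "bij_betw (suc M) (tim M) (tim M)"
  using bimodel unfolding is_bimodel_def by blast

lemma suc_pre: "t \<in> tim M \<Longrightarrow> suc M (pre M t) = t"
  using bij_suc by (metis bij_betw_def f_inv_into_f)

lemma pre_suc: "t \<in> tim M \<Longrightarrow> pre M (suc M t) = t"
  using bij_suc by (metis bij_betw_def inv_into_f_f)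

lemma funpow_suc_in: "t \<in> tim M \<Longrightarrow> (suc M ^^ n) t \<in> tim M"
  using bij_betwE[OF bij_suc] by (induction n) auto

lemma funpow_pre_in: "t \<in> tim M \<Longrightarrow> (pre M ^^ n) t \<in> tim M"
  using bij_betwE[OF bij_betw_inv_into[OF bij_suc]] by (induction n) auto

lemma sat_persistent:
  "v \<in> wor M \<Longrightarrow> w \<in> wor M \<Longrightarrow> mle M v w \<Longrightarrow> sat M w s \<psi> \<Longrightarrow> sat M v s \<psi>"
proof (induction \<psi> arbitrary: v w s)
  case (Atom p)
  then show ?case using val_downward_closed by auto
next
  case (Imp a b)
  then show ?case using mle_trans[of _ v w] by auto
next
  case (Coimp a b)
  then obtain u where "u \<in> wor M" "mle M w u" "sat M u s a" "\<not> sat M u s b" by auto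
  then show ?case using Coimp.prems mle_trans[of v w u] by auto
next
  case (Until a b)
  then show ?case by simp blast
next
  case (Since a b)
  then show ?case by simp blast
qed auto

lemma sat_Always_unfold: "sat M w t (Always a) \<longleftrightarrow> sat M w t a \<and> sat M w (suc M t) (Always a)"
  unfolding sat.simps by (rule all_funpow_unfold)

lemma sat_Hist_unfold: "sat M w t (Hist a) \<longleftrightarrow> sat M w t a \<and> sat M w (pre M t) (Hist a)"
  unfolding sat.simps by (rule all_funpow_unfold)

lemma sat_Until_unfold:
  "sat M w t (Until a b) \<longleftrightarrow> sat M w t b \<or> (sat M w t a \<and> sat M w (suc M t) (Until a b))"
  unfolding sat.simps by (rule ex_until_funpow_unfold)

lemma sat_Since_unfold:
  "sat M w t (Since a b) \<longleftrightarrow> sat M w t b \<or> (sat M w t a \<and> sat M w (pre M t) (Since a b))"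
  unfolding sat.simps by (rule ex_until_funpow_unfold)

definition time :: "int \<Rightarrow> 't" where
  "time t = (if 0 \<le> t then (suc M ^^ nat t) t0 else (pre M ^^ nat (- t)) t0)"

lemma time_0: "time 0 = t0"
  by (simp add: time_def)

lemma time_in: "time t \<in> tim M"
  using funpow_suc_in funpow_pre_in t0 by (simp add: time_def)

lemma suc_time: "suc M (time t) = time (t + 1)"
proof (cases "0 \<le> t")
  case True
  then have "nat (t + 1) = Suc (nat t)" by simp
  then show ?thesis using True by (simp add: time_def)
next
  case False
  then obtain n where n: "nat (- t) = Suc n" by (metis gr0_implies_Suc zero_less_nat_eq neg_0_less_iff_less not_le)
  then have "suc M (time t) = (pre M ^^ n) t0"
    using False suc_pre[OF funpow_pre_in[OF t0]] by (simp add: time_def)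
  also have "\<dots> = time (t + 1)"
  proof (cases "t = - 1")
    case False
    then have "\<not> 0 \<le> t + 1" "nat (- (t + 1)) = n" using \<open>\<not> 0 \<le> t\<close> n by auto
    then show ?thesis by (simp add: time_def)
  qed (use n in \<open>simp add: time_def\<close>)
  finally show ?thesis .
qed

lemma pre_time: "pre M (time t) = time (t - 1)"
  using suc_time[of "t - 1"] pre_suc[OF time_in[of "t - 1"]] by simp

lemma funpow_suc_time: "(suc M ^^ n) (time t) = time (t + int n)"
  by (induction n) (auto simp: suc_time algebra_simps)

lemma funpow_pre_time: "(pre M ^^ n) (time t) = time (t - int n)"
  by (induction n) (auto simp: pre_time algebra_simps)

end

text \<open>An eventuality is pending in a type while it still awaits its witness: \<open>Always a\<close> while
  it is absent (awaiting a point refuting \<open>a\<close>), \<open>Until a b\<close> while it is present (awaiting \<open>b\<close>).\<close>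

fun pendingF :: "'a fm \<Rightarrow> 'a fm set \<Rightarrow> bool" where
  "pendingF (Always a) L \<longleftrightarrow> Always a \<notin> L"
| "pendingF (Until a b) L \<longleftrightarrow> Until a b \<in> L"
| "pendingF _ L \<longleftrightarrow> False"

fun fulfilsF :: "'a fm \<Rightarrow> 'a fm set \<Rightarrow> bool" where
  "fulfilsF (Always a) L \<longleftrightarrow> a \<notin> L"
| "fulfilsF (Until a b) L \<longleftrightarrow> b \<in> L"
| "fulfilsF _ L \<longleftrightarrow> False"

fun pendingB :: "'a fm \<Rightarrow> 'a fm set \<Rightarrow> bool" where
  "pendingB (Hist a) L \<longleftrightarrow> Hist a \<notin> L"
| "pendingB (Since a b) L \<longleftrightarrow> Since a b \<in> L"
| "pendingB _ L \<longleftrightarrow> False"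

fun fulfilsB :: "'a fm \<Rightarrow> 'a fm set \<Rightarrow> bool" where
  "fulfilsB (Hist a) L \<longleftrightarrow> a \<notin> L"
| "fulfilsB (Since a b) L \<longleftrightarrow> b \<in> L"
| "fulfilsB _ L \<longleftrightarrow> False"

locale bimodel_types = pointed_bimodel M t0 for M :: "('a, 'w, 't) bimodel" and t0 +
  fixes \<phi> :: "'a fm"
begin

definition tp :: "'w \<Rightarrow> int \<Rightarrow> 'a fm set" where
  "tp w t = {\<psi> \<in> subf \<phi>. sat M w (time t) \<psi>}"

definition types_at :: "int \<Rightarrow> 'a fm set set" where
  "types_at t = (\<lambda>w. tp w t) ` wor M"

lemma tp_subset: "tp w t \<subseteq> subf \<phi>"
  by (auto simp: tp_def)

lemma tp_antimono: "v \<in> wor M \<Longrightarrow> w \<in> wor M \<Longrightarrow> mle M v w \<Longrightarrow> tp w t \<subseteq> tp v t"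
  using sat_persistent by (auto simp: tp_def)

lemma tp_in_types_at: "w \<in> wor M \<Longrightarrow> tp w t \<in> types_at t"
  by (simp add: types_at_def)

lemma types_at_subset: "L \<in> types_at t \<Longrightarrow> L \<subseteq> subf \<phi>"
  using tp_subset by (auto simp: types_at_def)

lemma types_at_linear: "L \<in> types_at t \<Longrightarrow> L' \<in> types_at t \<Longrightarrow> L \<subseteq> L' \<or> L' \<subseteq> L"
proof -
  assume "L \<in> types_at t" "L' \<in> types_at t"
  then obtain w w' where "w \<in> wor M" "w' \<in> wor M" "L = tp w t" "L' = tp w' t"
    by (auto simp: types_at_def)
  then show ?thesis using mle_linear[of w w'] tp_antimono[of w w' t] tp_antimono[of w' w t] by blast
qed

lemma finite_types_at: "finite (types_at t)"
  by (rule finite_subset[of _ "Pow (subf \<phi>)"]) (use types_at_subset finite_subf in auto)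

lemma finite_range_types_at: "finite (range (\<lambda>n. types_at (g n)))"
  by (rule finite_subset[of _ "Pow (Pow (subf \<phi>))"]) (use types_at_subset finite_subf in auto)

lemma tp_is_type: "w \<in> wor M \<Longrightarrow> is_type (subf \<phi>) (tp w t)"
  unfolding is_type_def
proof (intro conjI allI impI)
  assume w: "w \<in> wor M"
  fix a b
  show "Imp a b \<in> tp w t \<Longrightarrow> a \<notin> tp w t \<or> b \<in> tp w t"
    using w mle_refl[OF w] by (auto simp: tp_def dest: subf_closed)
  show "Imp a b \<in> subf \<phi> \<Longrightarrow> b \<in> tp w t \<Longrightarrow> Imp a b \<in> tp w t"
    using w sat_persistent[of _ w "time t" b] by (auto simp: tp_def)
  show "Coimp a b \<in> tp w t \<Longrightarrow> a \<in> tp w t"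
    using w sat_persistent[of w _ "time t" a] subf_closed(4) by (auto simp: tp_def)
  show "Coimp a b \<in> subf \<phi> \<Longrightarrow> a \<in> tp w t \<Longrightarrow> b \<notin> tp w t \<Longrightarrow> Coimp a b \<in> tp w t"
    using w mle_refl[OF w] subf_closed(4) by (auto simp: tp_def)
qed (auto simp: tp_def dest: subf_closed)

lemma tp_Next: "Next a \<in> subf \<phi> \<Longrightarrow> Next a \<in> tp w s \<longleftrightarrow> a \<in> tp w (s + 1)"
  using subf_closed(7) by (auto simp: tp_def suc_time)

lemma tp_Prev: "Prev a \<in> subf \<phi> \<Longrightarrow> Prev a \<in> tp w (s + 1) \<longleftrightarrow> a \<in> tp w s"
  using subf_closed(8) by (auto simp: tp_def pre_time)

lemma tp_Always:
  "Always a \<in> subf \<phi> \<Longrightarrow> Always a \<in> tp w s \<longleftrightarrow> a \<in> tp w s \<and> Always a \<in> tp w (s + 1)"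
  using subf_closed(9) sat_Always_unfold[of w "time s" a] by (auto simp: tp_def suc_time)

lemma tp_Hist:
  "Hist a \<in> subf \<phi> \<Longrightarrow> Hist a \<in> tp w (s + 1) \<longleftrightarrow> a \<in> tp w (s + 1) \<and> Hist a \<in> tp w s"
  using subf_closed(10) sat_Hist_unfold[of w "time (s + 1)" a] by (auto simp: tp_def pre_time)

lemma tp_Until:
  "Until a b \<in> subf \<phi> \<Longrightarrow>
   Until a b \<in> tp w s \<longleftrightarrow> b \<in> tp w s \<or> (a \<in> tp w s \<and> Until a b \<in> tp w (s + 1))"
  using subf_closed(5) sat_Until_unfold[of w "time s" a b] by (auto simp: tp_def suc_time)

lemma tp_Since:
  "Since a b \<in> subf \<phi> \<Longrightarrow>
   Since a b \<in> tp w (s + 1) \<longleftrightarrow> b \<in> tp w (s + 1) \<or> (a \<in> tp w (s + 1) \<and> Since a b \<in> tp w s)"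
  using subf_closed(6) sat_Since_unfold[of w "time (s + 1)" a b] by (auto simp: tp_def pre_time)

lemma pendingF_step:
  "e \<in> subf \<phi> \<Longrightarrow> pendingF e (tp w s) \<Longrightarrow> fulfilsF e (tp w s) \<or> pendingF e (tp w (s + 1))"
  using tp_Always[of _ w s] tp_Until[of _ _ w s] by (cases e) auto

lemma pendingB_step:
  "e \<in> subf \<phi> \<Longrightarrow> pendingB e (tp w s) \<Longrightarrow> fulfilsB e (tp w s) \<or> pendingB e (tp w (s - 1))"
  using tp_Hist[of _ w "s - 1"] tp_Since[of _ _ w "s - 1"] by (cases e) auto

lemma pendingF_persists:
  "e \<in> subf \<phi> \<Longrightarrow> pendingF e (tp w s) \<Longrightarrow> \<forall>j<J. \<not> fulfilsF e (tp w (s + int j)) \<Longrightarrow>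
   pendingF e (tp w (s + int J))"
proof (induction J)
  case (Suc J)
  then show ?case using pendingF_step[of e w "s + int J"] by (simp add: ac_simps)
qed simp

lemma pendingB_persists:
  "e \<in> subf \<phi> \<Longrightarrow> pendingB e (tp w s) \<Longrightarrow> \<forall>j<J. \<not> fulfilsB e (tp w (s - int j)) \<Longrightarrow>
   pendingB e (tp w (s - int J))"
proof (induction J)
  case (Suc J)
  then show ?case using pendingB_step[of e w "s - int J"] by (simp add: diff_diff_eq ac_simps)
qed simp

lemma pendingF_fulfilled:
  "e \<in> subf \<phi> \<Longrightarrow> pendingF e (tp w s) \<Longrightarrow> \<exists>n. fulfilsF e (tp w (s + int n))"
  by (cases e) (auto simp: tp_def funpow_suc_time dest: subf_closed)

lemma pendingB_fulfilled:
  "e \<in> subf \<phi> \<Longrightarrow> pendingB e (tp w s) \<Longrightarrow> \<exists>n. fulfilsB e (tp w (s - int n))"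
  by (cases e) (auto simp: tp_def funpow_pre_time dest: subf_closed)


lemma tp_realised_below:
  assumes "w \<in> wor M" "u \<in> wor M" "tp w t \<subseteq> tp u t"
  shows "\<exists>u'\<in>wor M. tp u' t = tp u t \<and> mle M u' w"
proof (cases "mle M u w")
  case False
  then have "tp u t = tp w t" using assms mle_linear[of u w] tp_antimono[of w u t] by blast
  then show ?thesis using assms mle_refl by auto
qed (use assms in blast)

lemma tp_realised_above:
  assumes "w \<in> wor M" "u \<in> wor M" "tp u t \<subseteq> tp w t"
  shows "\<exists>u'\<in>wor M. tp u' t = tp u t \<and> mle M w u'"
proof (cases "mle M w u")
  case False
  then have "tp u t = tp w t" using assms mle_linear[of w u] tp_antimono[of u w t] by blast
  then show ?thesis using assms mle_refl by auto
qed (use assms in blast)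

lemma tp_realised_between:
  assumes "u1 \<in> wor M" "u2 \<in> wor M" "v \<in> wor M" "tp u1 s = P" "tp u2 s = P"
    and "tp u2 t \<subseteq> tp v t" "tp v t \<subseteq> tp u1 t"
  shows "\<exists>w\<in>wor M. tp w s = P \<and> tp w t = tp v t"
proof (cases "mle M v u1")
  case True
  then show ?thesis using assms tp_antimono by blast
next
  case False
  then have "mle M u1 v" using mle_linear assms by blast
  show ?thesis
  proof (cases "mle M u2 v")
    case True
    then show ?thesis using assms tp_antimono by blast
  next
    case False
    then have "mle M v u2" using mle_linear assms by blast
    then have "tp v s = P" using \<open>mle M u1 v\<close> assms tp_antimono by blast
    then show ?thesis using assms by blast
  qed
qed

section \<open>Periodic windows\<close>

definition future_window :: "int \<Rightarrow> int \<Rightarrow> bool" where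
  "future_window A B \<longleftrightarrow> 0 \<le> A \<and> A \<le> B \<and> types_at (B + 1) = types_at A \<and>
     (\<forall>L\<in>types_at A. \<exists>u\<in>wor M. tp u A = L \<and>
        (\<forall>e\<in>subf \<phi>. pendingF e L \<longrightarrow> (\<exists>d::nat. A + int d \<le> B \<and> fulfilsF e (tp u (A + int d)))))"

definition past_window :: "int \<Rightarrow> int \<Rightarrow> bool" where
  "past_window C E \<longleftrightarrow> C < E \<and> E \<le> 0 \<and> types_at C = types_at E \<and>
     (\<forall>L\<in>types_at E. \<exists>u\<in>wor M. tp u E = L \<and>
        (\<forall>e\<in>subf \<phi>. pendingB e L \<longrightarrow> (\<exists>d::nat. C \<le> E - int d \<and> fulfilsB e (tp u (E - int d)))))"

lemma eventually_fulfilledF: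
  "\<forall>\<^sub>F m in sequentially. \<forall>e\<in>subf \<phi>. pendingF e (tp u s) \<longrightarrow>
     (\<exists>d\<le>m. fulfilsF e (tp u (s + int d)))"
proof (intro eventually_ball_finite finite_subf ballI)
  fix e assume "e \<in> subf \<phi>"
  then show "\<forall>\<^sub>F m in sequentially. pendingF e (tp u s) \<longrightarrow> (\<exists>d\<le>m. fulfilsF e (tp u (s + int d)))"
  proof (cases "pendingF e (tp u s)")
    case True
    then obtain n where "fulfilsF e (tp u (s + int n))"
      using pendingF_fulfilled \<open>e \<in> subf \<phi>\<close> by blast
    then show ?thesis unfolding eventually_sequentially by (intro exI[of _ n]) auto
  qed simp
qed

lemma eventually_fulfilledB:
  "\<forall>\<^sub>F m in sequentially. \<forall>e\<in>subf \<phi>. pendingB e (tp u s) \<longrightarrow>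
     (\<exists>d\<le>m. fulfilsB e (tp u (s - int d)))"
proof (intro eventually_ball_finite finite_subf ballI)
  fix e assume "e \<in> subf \<phi>"
  then show "\<forall>\<^sub>F m in sequentially. pendingB e (tp u s) \<longrightarrow> (\<exists>d\<le>m. fulfilsB e (tp u (s - int d)))"
  proof (cases "pendingB e (tp u s)")
    case True
    then obtain n where "fulfilsB e (tp u (s - int n))"
      using pendingB_fulfilled \<open>e \<in> subf \<phi>\<close> by blast
    then show ?thesis unfolding eventually_sequentially by (intro exI[of _ n]) auto
  qed simp
qed

lemma future_window_exists: "\<exists>A B. future_window A B"
proof -
  let ?P = "\<lambda>a m. \<forall>L\<in>types_at (int a). \<exists>u\<in>wor M. tp u (int a) = L \<and>
     (\<forall>e\<in>subf \<phi>. pendingF e L \<longrightarrow> (\<exists>d\<le>m. fulfilsF e (tp u (int a + int d))))"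
  have "\<forall>\<^sub>F m in sequentially. ?P a m" for a
  proof (intro eventually_ball_finite finite_types_at ballI)
    fix L assume "L \<in> types_at (int a)"
    then obtain u where u: "u \<in> wor M" "tp u (int a) = L" by (auto simp: types_at_def)
    show "\<forall>\<^sub>F m in sequentially. \<exists>u\<in>wor M. tp u (int a) = L \<and>
       (\<forall>e\<in>subf \<phi>. pendingF e L \<longrightarrow> (\<exists>d\<le>m. fulfilsF e (tp u (int a + int d))))"
      by (rule eventually_mono[OF eventually_fulfilledF[of u "int a"]]) (use u in blast)
  qed
  then obtain a b where ab: "a < b" "types_at (int a) = types_at (int b)" and "?P a (b - Suc a)"
    using recurrent_window[of "\<lambda>n. types_at (int n)" ?P, OF finite_range_types_at] by blast
  moreover have "int a + int d \<le> int b - 1" if "d \<le> b - Suc a" for d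
    using that ab(1) by linarith
  ultimately have "future_window (int a) (int b - 1)"
    unfolding future_window_def by (fastforce simp: ab(2))
  then show ?thesis by blast
qed

lemma past_window_exists: "\<exists>C E. past_window C E"
proof -
  let ?P = "\<lambda>a m. \<forall>L\<in>types_at (- int a). \<exists>u\<in>wor M. tp u (- int a) = L \<and>
     (\<forall>e\<in>subf \<phi>. pendingB e L \<longrightarrow> (\<exists>d\<le>m. fulfilsB e (tp u (- int a - int d))))"
  have "\<forall>\<^sub>F m in sequentially. ?P a m" for a
  proof (intro eventually_ball_finite finite_types_at ballI)
    fix L assume "L \<in> types_at (- int a)"
    then obtain u where u: "u \<in> wor M" "tp u (- int a) = L" by (auto simp: types_at_def)
    show "\<forall>\<^sub>F m in sequentially. \<exists>u\<in>wor M. tp u (- int a) = L \<and>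
       (\<forall>e\<in>subf \<phi>. pendingB e L \<longrightarrow> (\<exists>d\<le>m. fulfilsB e (tp u (- int a - int d))))"
      by (rule eventually_mono[OF eventually_fulfilledB[of u "- int a"]]) (use u in blast)
  qed
  then obtain a b where ab: "a < b" "types_at (- int a) = types_at (- int b)" and "?P a (b - Suc a)"
    using recurrent_window[of "\<lambda>n. types_at (- int n)" ?P, OF finite_range_types_at] by blast
  moreover have "- int b \<le> - int a - int d" if "d \<le> b - Suc a" for d
    using that ab(1) by linarith
  ultimately have "past_window (- int b) (- int a)"
    unfolding past_window_def by (fastforce simp: ab(2))
  then show ?thesis by blast
qed

lemma finite_window_types: "finite {(t, L). C \<le> t \<and> t \<le> B \<and> L \<in> types_at t}"
proof (rule finite_subset)
  show "{(t, L). C \<le> t \<and> t \<le> B \<and> L \<in> types_at t} \<subseteq> {C..B} \<times> Pow (subf \<phi>)"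
    using types_at_subset by auto
  show "finite ({C..B} \<times> Pow (subf \<phi>))" by (simp add: finite_subf)
qed

end

section \<open>The quotient quasimodel\<close>

text \<open>Quasimodels live on natural numbers, so the points \<open>(t, L)\<close> are enumerated.\<close>

locale periodic_quotient = bimodel_types M t0 \<phi> for M :: "('a, 'w, 't) bimodel" and t0 \<phi> +
  fixes A B C E :: int and W :: "nat set"
    and time_of :: "nat \<Rightarrow> int" and label_of :: "nat \<Rightarrow> 'a fm set"
  assumes future_window: "future_window A B" and past_window: "past_window C E"
    and enumeration:
      "bij_betw (\<lambda>x. (time_of x, label_of x)) W {(t, L). C \<le> t \<and> t \<le> B \<and> L \<in> types_at t}"
begin

lemma window_bounds: "C < E" "E \<le> 0" "0 \<le> A" "A \<le> B"
  using future_window past_window unfolding future_window_def past_window_def by blast+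

lemma types_at_recur: "types_at (B + 1) = types_at A" "types_at C = types_at E"
  using future_window past_window unfolding future_window_def past_window_def by blast+

lemma future_window_witness:
  "L \<in> types_at A \<Longrightarrow> \<exists>u\<in>wor M. tp u A = L \<and>
     (\<forall>e\<in>subf \<phi>. pendingF e L \<longrightarrow> (\<exists>d::nat. A + int d \<le> B \<and> fulfilsF e (tp u (A + int d))))"
  using future_window unfolding future_window_def by blast

lemma past_window_witness:
  "L \<in> types_at E \<Longrightarrow> \<exists>u\<in>wor M. tp u E = L \<and>
     (\<forall>e\<in>subf \<phi>. pendingB e L \<longrightarrow> (\<exists>d::nat. C \<le> E - int d \<and> fulfilsB e (tp u (E - int d))))"
  using past_window unfolding past_window_def by blast

lemma point_in_window:
  "x \<in> W \<Longrightarrow> C \<le> time_of x \<and> time_of x \<le> B \<and> label_of x \<in> types_at (time_of x)"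
proof -
  assume "x \<in> W"
  then have "(time_of x, label_of x) \<in> {(t, L). C \<le> t \<and> t \<le> B \<and> L \<in> types_at t}"
    using bij_betwE[OF enumeration] by blast
  then show ?thesis by simp
qed

lemma point_eqI:
  "x \<in> W \<Longrightarrow> y \<in> W \<Longrightarrow> time_of x = time_of y \<Longrightarrow> label_of x = label_of y \<Longrightarrow> x = y"
  using inj_onD[OF bij_betw_imp_inj_on[OF enumeration], of x y] by simp

lemma point_exists: "C \<le> t \<Longrightarrow> t \<le> B \<Longrightarrow> L \<in> types_at t \<Longrightarrow> \<exists>x\<in>W. time_of x = t \<and> label_of x = L"
proof -
  assume "C \<le> t" "t \<le> B" "L \<in> types_at t"
  then have "(t, L) \<in> (\<lambda>x. (time_of x, label_of x)) ` W"
    using bij_betw_imp_surj_on[OF enumeration] by simp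
  then obtain x where "x \<in> W" "(t, L) = (time_of x, label_of x)" by (rule imageE)
  then show ?thesis by auto
qed

lemma point_at: "C \<le> t \<Longrightarrow> t \<le> B \<Longrightarrow> w \<in> wor M \<Longrightarrow> \<exists>x\<in>W. time_of x = t \<and> label_of x = tp w t"
  using point_exists tp_in_types_at by blast

lemma label_realised: "x \<in> W \<Longrightarrow> \<exists>w\<in>wor M. tp w (time_of x) = label_of x"
  using point_in_window unfolding types_at_def by blast

lemma label_subset: "x \<in> W \<Longrightarrow> label_of x \<subseteq> subf \<phi>"
  using point_in_window types_at_subset by blast

text \<open>An edge from \<open>s\<close> is always realised by times \<open>s\<close> and \<open>s + 1\<close> of a single world; this is
  sound for the back edges because \<open>B + 1\<close> has the types of \<open>A\<close> and \<open>E\<close> those of \<open>C\<close>.\<close>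

definition frame :: "(int \<times> int) set" where
  "frame = {(t, t + 1) | t. C \<le> t \<and> t < B} \<union> {(B, A), (E - 1, C)}"

definition qle :: "(nat \<times> nat) set" where
  "qle = {(x, y). x \<in> W \<and> y \<in> W \<and> time_of x = time_of y \<and> label_of y \<subseteq> label_of x}"

definition qrel :: "(nat \<times> nat) set" where
  "qrel = {(x, y). x \<in> W \<and> y \<in> W \<and> (time_of x, time_of y) \<in> frame \<and>
     (\<exists>w\<in>wor M. tp w (time_of x) = label_of x \<and> tp w (time_of x + 1) = label_of y)}"

lemma frameD:
  "(s, t) \<in> frame \<Longrightarrow> C \<le> s \<and> s \<le> B \<and> C \<le> t \<and> t \<le> B \<and> types_at (s + 1) = types_at t"
  using window_bounds types_at_recur unfolding frame_def by auto

lemma qle_iff: "(x, y) \<in> qle \<longleftrightarrow> x \<in> W \<and> y \<in> W \<and> time_of x = time_of y \<and> label_of y \<subseteq> label_of x"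
  by (simp add: qle_def)

lemma qrelI:
  "x \<in> W \<Longrightarrow> y \<in> W \<Longrightarrow> (time_of x, time_of y) \<in> frame \<Longrightarrow> w \<in> wor M \<Longrightarrow>
   tp w (time_of x) = label_of x \<Longrightarrow> tp w (time_of x + 1) = label_of y \<Longrightarrow> (x, y) \<in> qrel"
  unfolding qrel_def by blast

lemma qrelD:
  "(x, y) \<in> qrel \<Longrightarrow> x \<in> W \<and> y \<in> W \<and> (time_of x, time_of y) \<in> frame \<and>
   (\<exists>w\<in>wor M. tp w (time_of x) = label_of x \<and> tp w (time_of x + 1) = label_of y)"
  unfolding qrel_def by blast

lemma component_eq: "x \<in> W \<Longrightarrow> component W qle x = {v \<in> W. time_of v = time_of x}"
  using point_in_window types_at_linear unfolding component_def qle_def by fastforce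

lemma qrel_forward_path:
  "x \<in> W \<Longrightarrow> w \<in> wor M \<Longrightarrow> tp w (time_of x) = label_of x \<Longrightarrow> time_of x + int n \<le> B \<Longrightarrow>
   \<exists>y\<in>W. (x, y) \<in> qrel ^^ n \<and> time_of y = time_of x + int n \<and> label_of y = tp w (time_of x + int n)"
proof (induction n)
  case (Suc n)
  then obtain y where y: "y \<in> W" "(x, y) \<in> qrel ^^ n" "time_of y = time_of x + int n"
    "label_of y = tp w (time_of x + int n)"
    by auto
  have "C \<le> time_of x" using point_in_window Suc.prems by blast
  then obtain y' where y': "y' \<in> W" "time_of y' = time_of x + int n + 1"
    "label_of y' = tp w (time_of x + int n + 1)"
    using point_at[of "time_of x + int n + 1" w] Suc.prems by auto
  have "(time_of y, time_of y') \<in> frame"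
    using y(3) y'(2) \<open>C \<le> time_of x\<close> Suc.prems(4) unfolding frame_def by force
  then have "(y, y') \<in> qrel" using qrelI[of y y' w] y y' Suc.prems(2) by (simp add: add.assoc)
  moreover have "time_of x + int (Suc n) = time_of x + int n + 1" by simp
  ultimately show ?case using y' relpow_Suc_I[OF y(2)] by metis
qed auto

lemma qrel_backward_path:
  "x \<in> W \<Longrightarrow> w \<in> wor M \<Longrightarrow> tp w (time_of x) = label_of x \<Longrightarrow> C \<le> time_of x - int n \<Longrightarrow>
   \<exists>y\<in>W. (y, x) \<in> qrel ^^ n \<and> time_of y = time_of x - int n \<and> label_of y = tp w (time_of x - int n)"
proof (induction n)
  case (Suc n)
  then obtain y where y: "y \<in> W" "(y, x) \<in> qrel ^^ n" "time_of y = time_of x - int n"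
    "label_of y = tp w (time_of x - int n)"
    by auto
  have "time_of x \<le> B" using point_in_window Suc.prems by blast
  then obtain y' where y': "y' \<in> W" "time_of y' = time_of x - int n - 1"
    "label_of y' = tp w (time_of x - int n - 1)"
    using point_at[of "time_of x - int n - 1" w] Suc.prems by auto
  have "(time_of y', time_of y) \<in> frame"
    using y(3) y'(2) \<open>time_of x \<le> B\<close> Suc.prems(4) unfolding frame_def by force
  then have "(y', y) \<in> qrel" using qrelI[of y' y w] y y' Suc.prems(2) by simp
  moreover have "time_of x - int (Suc n) = time_of x - int n - 1" by simp
  ultimately show ?case using y' relpow_Suc_I2[OF _ y(2)] by metis
qed auto


lemma qrel_fulfilsF_after_loop:
  assumes e: "e \<in> subf \<phi>" and w: "w \<in> wor M" and pending: "pendingF e (tp w (B + 1))"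
    and y: "y \<in> W" "time_of y = B" "label_of y = tp w B"
  shows "\<exists>n v. (y, v) \<in> qrel ^^ n \<and> fulfilsF e (label_of v)"
proof -
  have L: "tp w (B + 1) \<in> types_at A" using types_at_recur(1) tp_in_types_at[OF w] by metis
  from future_window_witness[OF L] obtain u where u: "u \<in> wor M" "tp u A = tp w (B + 1)"
    and witness: "\<forall>e\<in>subf \<phi>. pendingF e (tp w (B + 1)) \<longrightarrow>
       (\<exists>d::nat. A + int d \<le> B \<and> fulfilsF e (tp u (A + int d)))"
    by blast
  obtain d where d: "A + int d \<le> B" "fulfilsF e (tp u (A + int d))" using witness e pending by blast
  have "C \<le> A" using window_bounds by simp
  then obtain z where z: "z \<in> W" "time_of z = A" "label_of z = tp w (B + 1)"
    using point_exists[OF _ window_bounds(4) L] by blast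
  have "(y, z) \<in> qrel" using qrelI[of y z w] y z w by (simp add: frame_def)
  moreover obtain v where "(z, v) \<in> qrel ^^ d" "label_of v = tp u (A + int d)"
    using qrel_forward_path[OF z(1) u(1), of d] z u d by auto
  ultimately have "(y, v) \<in> qrel ^^ Suc d" "fulfilsF e (label_of v)"
    using relpow_Suc_I2 d(2) by auto
  then show ?thesis by blast
qed

lemma qrel_fulfilsF:
  assumes e: "e \<in> subf \<phi>" and x: "x \<in> W" and p: "pendingF e (label_of x)"
  shows "\<exists>n v. (x, v) \<in> qrel ^^ n \<and> fulfilsF e (label_of v)"
proof -
  obtain w where w: "w \<in> wor M" "tp w (time_of x) = label_of x" using label_realised x by blast
  define J where "J = nat (B - time_of x)"
  have J: "time_of x + int J = B" using point_in_window[OF x] by (simp add: J_def)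
  show ?thesis
  proof (cases "\<exists>j\<le>J. fulfilsF e (tp w (time_of x + int j))")
    case True
    then obtain j where j: "j \<le> J" "fulfilsF e (tp w (time_of x + int j))" by blast
    then obtain y where "(x, y) \<in> qrel ^^ j" "label_of y = tp w (time_of x + int j)"
      using qrel_forward_path[OF x w, of j] J by auto
    then show ?thesis using j(2) by (intro exI[of _ j] exI[of _ y]) simp
  next
    case False
    then have "\<forall>j<Suc J. \<not> fulfilsF e (tp w (time_of x + int j))" by (simp add: less_Suc_eq_le)
    then have "pendingF e (tp w (time_of x + int (Suc J)))"
      by (rule pendingF_persists[OF e p[folded w(2)]])
    also have "time_of x + int (Suc J) = B + 1" using J by simp
    finally have pending: "pendingF e (tp w (B + 1))" .
    obtain y where y: "y \<in> W" "(x, y) \<in> qrel ^^ J" "time_of y = B" "label_of y = tp w B"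
      using qrel_forward_path[OF x w, of J] J by auto
    obtain n v where "(y, v) \<in> qrel ^^ n" "fulfilsF e (label_of v)"
      using qrel_fulfilsF_after_loop[OF e w(1) pending y(1,3,4)] by blast
    then show ?thesis using relpow_trans[OF y(2)] by blast
  qed
qed

lemma qrel_fulfilsB_after_loop:
  assumes e: "e \<in> subf \<phi>" and w: "w \<in> wor M" and pending: "pendingB e (tp w C)"
    and y: "y \<in> W" "time_of y = C" "label_of y = tp w C"
  shows "\<exists>n v. (v, y) \<in> qrel ^^ n \<and> fulfilsB e (label_of v)"
proof -
  have L: "tp w C \<in> types_at E" using types_at_recur(2) tp_in_types_at[OF w] by metis
  from past_window_witness[OF L] obtain u where u: "u \<in> wor M" "tp u E = tp w C"
    and witness: "\<forall>e\<in>subf \<phi>. pendingB e (tp w C) \<longrightarrow>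
       (\<exists>d::nat. C \<le> E - int d \<and> fulfilsB e (tp u (E - int d)))"
    by blast
  obtain d where d: "C \<le> E - int d" "fulfilsB e (tp u (E - int d))" using witness e pending by blast
  show ?thesis
  proof (cases d)
    case 0
    then show ?thesis using d y u by (intro exI[of _ 0] exI[of _ y]) simp
  next
    case (Suc d')
    have "E - int d \<le> B" using window_bounds by simp
    then obtain z where z: "z \<in> W" "time_of z = E - int d" "label_of z = tp u (E - int d)"
      using point_at[OF d(1) _ u(1)] by blast
    have "time_of z + int d' = E - 1" using z(2) Suc by simp
    moreover have "E - 1 \<le> B" using window_bounds by simp
    ultimately obtain z' where z': "(z, z') \<in> qrel ^^ d'" "z' \<in> W" "time_of z' = E - 1"
      "label_of z' = tp u (E - 1)"
      using qrel_forward_path[OF z(1) u(1), of d'] z(2,3) Suc by auto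
    have "(z', y) \<in> qrel" using qrelI[of z' y u] z' y u by (simp add: frame_def)
    with z'(1) have "(z, y) \<in> qrel ^^ Suc d'" by (rule relpow_Suc_I)
    then show ?thesis using z(3) d(2) by (intro exI[of _ "Suc d'"] exI[of _ z]) simp
  qed
qed

lemma qrel_fulfilsB:
  assumes e: "e \<in> subf \<phi>" and x: "x \<in> W" and p: "pendingB e (label_of x)"
  shows "\<exists>n v. (v, x) \<in> qrel ^^ n \<and> fulfilsB e (label_of v)"
proof -
  obtain w where w: "w \<in> wor M" "tp w (time_of x) = label_of x" using label_realised x by blast
  define J where "J = nat (time_of x - C)"
  have J: "time_of x - int J = C" using point_in_window[OF x] by (simp add: J_def)
  show ?thesis
  proof (cases "\<exists>j<J. fulfilsB e (tp w (time_of x - int j))")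
    case True
    then obtain j where j: "j < J" "fulfilsB e (tp w (time_of x - int j))" by blast
    then obtain y where "(y, x) \<in> qrel ^^ j" "label_of y = tp w (time_of x - int j)"
      using qrel_backward_path[OF x w, of j] J by auto
    then show ?thesis using j(2) by (intro exI[of _ j] exI[of _ y]) simp
  next
    case False
    then have "pendingB e (tp w (time_of x - int J))"
      using pendingB_persists[OF e p[folded w(2)]] by blast
    then have pending: "pendingB e (tp w C)" unfolding J .
    obtain y where y: "y \<in> W" "(y, x) \<in> qrel ^^ J" "time_of y = C" "label_of y = tp w C"
      using qrel_backward_path[OF x w, of J] J by auto
    obtain n v where "(v, y) \<in> qrel ^^ n" "fulfilsB e (label_of v)"
      using qrel_fulfilsB_after_loop[OF e w(1) pending y(1,3,4)] by blast
    then show ?thesis using relpow_trans[OF _ y(2)] by blast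
  qed
qed

lemma disjoint_union_of_linear_qle: "disjoint_union_of_linear W qle"
  unfolding disjoint_union_of_linear_def
proof (intro conjI ballI impI)
  show "qle \<subseteq> W \<times> W" unfolding qle_def by blast
next
  fix w assume "w \<in> W"
  then show "(w, w) \<in> qle" by (simp add: qle_iff)
next
  fix w v assume "w \<in> W" "v \<in> W" "(w, v) \<in> qle \<and> (v, w) \<in> qle"
  then show "w = v" by (auto simp: qle_iff intro!: point_eqI[of w v])
next
  fix u w v assume "u \<in> W" "w \<in> W" "v \<in> W" "(u, w) \<in> qle \<and> (w, v) \<in> qle"
  then show "(u, v) \<in> qle" unfolding qle_iff by (metis order_trans)
next
  fix u w v assume "u \<in> W" "w \<in> W" "v \<in> W" "v \<in> component W qle w \<and> u \<in> component W qle w"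
  then show "u \<in> component W qle v" by (simp add: component_eq)
qed

lemma qle_Imp_witness:
  assumes x: "x \<in> W" and ab: "Imp a b \<in> subf \<phi>" "Imp a b \<notin> label_of x"
  shows "\<exists>v\<in>W. (v, x) \<in> qle \<and> a \<in> label_of v \<and> b \<notin> label_of v"
proof -
  obtain w where w: "w \<in> wor M" "tp w (time_of x) = label_of x" using label_realised x by blast
  then have "\<not> sat M w (time (time_of x)) (Imp a b)" using ab unfolding tp_def by blast
  then obtain v where v: "v \<in> wor M" "mle M v w" "sat M v (time (time_of x)) a"
    "\<not> sat M v (time (time_of x)) b"
    by auto
  obtain y where y: "y \<in> W" "time_of y = time_of x" "label_of y = tp v (time_of x)"
    using point_at point_in_window[OF x] v(1) by blast
  have "(y, x) \<in> qle"
    using tp_antimono[OF v(1) w(1) v(2), of "time_of x"] w(2) x y by (simp add: qle_iff)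
  moreover have "a \<in> label_of y" "b \<notin> label_of y"
    using y v subf_closed(3)[OF ab(1)] by (auto simp: tp_def)
  ultimately show ?thesis using y by blast
qed

lemma qle_Coimp_witness:
  assumes x: "x \<in> W" and ab: "Coimp a b \<in> label_of x"
  shows "\<exists>v\<in>W. (x, v) \<in> qle \<and> a \<in> label_of v \<and> b \<notin> label_of v"
proof -
  obtain w where w: "w \<in> wor M" "tp w (time_of x) = label_of x" using label_realised x by blast
  then have "sat M w (time (time_of x)) (Coimp a b)" using ab unfolding tp_def by blast
  then obtain v where v: "v \<in> wor M" "mle M w v" "sat M v (time (time_of x)) a"
    "\<not> sat M v (time (time_of x)) b"
    by auto
  obtain y where y: "y \<in> W" "time_of y = time_of x" "label_of y = tp v (time_of x)"
    using point_at point_in_window[OF x] v(1) by blast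
  have "(x, y) \<in> qle"
    using tp_antimono[OF w(1) v(1) v(2), of "time_of x"] w(2) x y by (simp add: qle_iff)
  moreover have "Coimp a b \<in> subf \<phi>" using ab label_subset[OF x] by blast
  then have "a \<in> label_of y" "b \<notin> label_of y" using y v subf_closed(4) by (auto simp: tp_def)
  ultimately show ?thesis using y by blast
qed

lemma labelled_space: "labelled_space (subf \<phi>) W qle label_of"
  unfolding labelled_space_def
proof (intro conjI ballI allI impI)
  fix x assume "x \<in> W"
  then show "is_type (subf \<phi>) (label_of x)" using label_realised tp_is_type by metis
next
  fix x y assume "(x, y) \<in> qle"
  then show "label_of y \<subseteq> label_of x" by (simp add: qle_iff)
qed (fact disjoint_union_of_linear_qle qle_Imp_witness qle_Coimp_witness)+

lemma qrel_serial: "x \<in> W \<Longrightarrow> \<exists>y. (x, y) \<in> qrel"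
proof -
  assume x: "x \<in> W"
  obtain w where w: "w \<in> wor M" "tp w (time_of x) = label_of x" using label_realised x by blast
  have "C \<le> time_of x" "time_of x \<le> B" using point_in_window x by auto
  then obtain t where t: "(time_of x, t) \<in> frame"
    unfolding frame_def by (cases "time_of x < B") auto
  from frameD[OF t] have "C \<le> t" "t \<le> B" "types_at (time_of x + 1) = types_at t" by auto
  moreover have "tp w (time_of x + 1) \<in> types_at (time_of x + 1)" using tp_in_types_at[OF w(1)] .
  ultimately obtain y where y: "y \<in> W" "time_of y = t" "label_of y = tp w (time_of x + 1)"
    using point_exists by metis
  have "(x, y) \<in> qrel" using qrelI[OF x y(1) _ w] t y by simp
  then show ?thesis by blast
qed

lemma qrel_coserial: "x \<in> W \<Longrightarrow> \<exists>y. (y, x) \<in> qrel"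
proof -
  assume x: "x \<in> W"
  have x_window: "C \<le> time_of x" "time_of x \<le> B" using point_in_window x by auto
  show ?thesis
  proof (cases "C < time_of x")
    case True
    obtain w where w: "w \<in> wor M" "tp w (time_of x) = label_of x" using label_realised x by blast
    obtain y where y: "y \<in> W" "time_of y = time_of x - 1" "label_of y = tp w (time_of x - 1)"
      using point_at[of "time_of x - 1" w] True x_window w by auto
    have "(time_of y, time_of x) \<in> frame" using y True x_window by (force simp: frame_def)
    then show ?thesis using qrelI[OF y(1) x _ w(1)] y w by auto
  next
    case False
    then have "time_of x = C" using x_window by simp
    then have "label_of x \<in> types_at E" using point_in_window[OF x] types_at_recur(2) by simp
    then obtain u where u: "u \<in> wor M" "tp u E = label_of x" by (auto simp: types_at_def)
    obtain y where y: "y \<in> W" "time_of y = E - 1" "label_of y = tp u (E - 1)"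
      using point_at[of "E - 1" u] u window_bounds by auto
    have "(time_of y, time_of x) \<in> frame" using y \<open>time_of x = C\<close> by (simp add: frame_def)
    then show ?thesis using qrelI[OF y(1) x _ u(1)] y u by auto
  qed
qed

lemma qrel_forth_down:
  assumes "(x, x') \<in> qle" "(x', y') \<in> qrel"
  shows "\<exists>y. (x, y) \<in> qrel \<and> (y, y') \<in> qle"
proof -
  have x: "x \<in> W" "time_of x = time_of x'" "label_of x' \<subseteq> label_of x" using assms(1) qle_iff by blast+
  from qrelD[OF assms(2)] obtain w where w: "w \<in> wor M" "tp w (time_of x') = label_of x'"
    "tp w (time_of x' + 1) = label_of y'" and frame: "(time_of x', time_of y') \<in> frame" by blast
  obtain u where u: "u \<in> wor M" "tp u (time_of x) = label_of x" using label_realised x(1) by blast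
  obtain u' where u': "u' \<in> wor M" "tp u' (time_of x) = label_of x" "mle M u' w"
    using tp_realised_below[OF w(1) u(1), of "time_of x"] x w u by auto
  from frameD[OF frame] have "C \<le> time_of y'" "time_of y' \<le> B"
    "tp u' (time_of x + 1) \<in> types_at (time_of y')"
    using x tp_in_types_at[OF u'(1)] by auto
  then obtain y where y: "y \<in> W" "time_of y = time_of y'" "label_of y = tp u' (time_of x + 1)"
    using point_exists by blast
  have "(x, y) \<in> qrel" using qrelI[OF x(1) y(1) _ u'(1) u'(2)] frame x y by simp
  moreover have "(y, y') \<in> qle"
    using tp_antimono[OF u'(1) w(1) u'(3), of "time_of x + 1"] y w x qrelD[OF assms(2)]
    by (simp add: qle_iff)
  ultimately show ?thesis by blast
qed

lemma qrel_forth_up: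
  assumes "(x, x') \<in> qle" "(x, y) \<in> qrel"
  shows "\<exists>y'. (x', y') \<in> qrel \<and> (y, y') \<in> qle"
proof -
  have x: "x' \<in> W" "time_of x = time_of x'" "label_of x' \<subseteq> label_of x" using assms(1) qle_iff by blast+
  from qrelD[OF assms(2)] obtain u where u: "u \<in> wor M" "tp u (time_of x) = label_of x"
    "tp u (time_of x + 1) = label_of y" and frame: "(time_of x, time_of y) \<in> frame" by blast
  obtain w where w: "w \<in> wor M" "tp w (time_of x') = label_of x'" using label_realised x(1) by blast
  obtain w' where w': "w' \<in> wor M" "tp w' (time_of x) = label_of x'" "mle M u w'"
    using tp_realised_above[OF u(1) w(1), of "time_of x"] x w u by auto
  from frameD[OF frame] have "C \<le> time_of y" "time_of y \<le> B"
    "tp w' (time_of x + 1) \<in> types_at (time_of y)"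
    using tp_in_types_at[OF w'(1)] by auto
  then obtain y' where y': "y' \<in> W" "time_of y' = time_of y" "label_of y' = tp w' (time_of x + 1)"
    using point_exists by blast
  have "(x', y') \<in> qrel" using qrelI[OF x(1) y'(1) _ w'(1)] frame x y' w' by simp
  moreover have "(y, y') \<in> qle"
    using tp_antimono[OF u(1) w'(1) w'(3), of "time_of x + 1"] y' u qrelD[OF assms(2)]
    by (simp add: qle_iff)
  ultimately show ?thesis by blast
qed

lemma qrel_back_down:
  assumes "(x', y') \<in> qrel" "(y, y') \<in> qle"
  shows "\<exists>x. (x, x') \<in> qle \<and> (x, y) \<in> qrel"
proof -
  have y: "y \<in> W" "time_of y = time_of y'" "label_of y' \<subseteq> label_of y" using assms(2) qle_iff by blast+
  from qrelD[OF assms(1)] obtain w where w: "w \<in> wor M" "tp w (time_of x') = label_of x'"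
    "tp w (time_of x' + 1) = label_of y'" and frame: "(time_of x', time_of y') \<in> frame"
    and x': "x' \<in> W" by blast
  from frameD[OF frame] have window: "C \<le> time_of x'" "time_of x' \<le> B"
    and "label_of y \<in> types_at (time_of x' + 1)" using point_in_window[OF y(1)] y by auto
  then obtain v where v: "v \<in> wor M" "tp v (time_of x' + 1) = label_of y" by (auto simp: types_at_def)
  obtain v' where v': "v' \<in> wor M" "tp v' (time_of x' + 1) = label_of y" "mle M v' w"
    using tp_realised_below[OF w(1) v(1), of "time_of x' + 1"] v w y by auto
  obtain x where x: "x \<in> W" "time_of x = time_of x'" "label_of x = tp v' (time_of x')"
    using point_at[OF window v'(1)] by blast
  have "(x, x') \<in> qle" using tp_antimono[OF v'(1) w(1) v'(3), of "time_of x'"] x x' w by (simp add: qle_iff)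
  moreover have "(x, y) \<in> qrel" using qrelI[OF x(1) y(1) _ v'(1)] frame x y v' by simp
  ultimately show ?thesis by blast
qed

lemma qrel_back_up:
  assumes "(x, y) \<in> qrel" "(y, y') \<in> qle"
  shows "\<exists>x'. (x, x') \<in> qle \<and> (x', y') \<in> qrel"
proof -
  have y: "y' \<in> W" "time_of y = time_of y'" "label_of y' \<subseteq> label_of y" using assms(2) qle_iff by blast+
  from qrelD[OF assms(1)] obtain u where u: "u \<in> wor M" "tp u (time_of x) = label_of x"
    "tp u (time_of x + 1) = label_of y" and frame: "(time_of x, time_of y) \<in> frame"
    and x: "x \<in> W" by blast
  from frameD[OF frame] have window: "C \<le> time_of x" "time_of x \<le> B"
    and "label_of y' \<in> types_at (time_of x + 1)" using point_in_window[OF y(1)] y by auto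
  then obtain v where v: "v \<in> wor M" "tp v (time_of x + 1) = label_of y'" by (auto simp: types_at_def)
  obtain v' where v': "v' \<in> wor M" "tp v' (time_of x + 1) = label_of y'" "mle M u v'"
    using tp_realised_above[OF u(1) v(1), of "time_of x + 1"] v u y by auto
  obtain x' where x': "x' \<in> W" "time_of x' = time_of x" "label_of x' = tp v' (time_of x)"
    using point_at[OF window v'(1)] by blast
  have "(x, x') \<in> qle" using tp_antimono[OF u(1) v'(1) v'(3), of "time_of x"] x x' u by (simp add: qle_iff)
  moreover have "(x', y') \<in> qrel" using qrelI[OF x'(1) y(1) _ v'(1)] frame x' y v' by simp
  ultimately show ?thesis by blast
qed


lemma qrel_image_convex: "convex_set qle (qrel `` {x})"
  unfolding convex_set_def
proof (intro ballI allI impI)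
  fix y1 y2 z assume "y1 \<in> qrel `` {x}" "y2 \<in> qrel `` {x}" and z: "(y1, z) \<in> qle \<and> (z, y2) \<in> qle"
  then have r1: "(x, y1) \<in> qrel" and r2: "(x, y2) \<in> qrel" by auto
  have zz: "z \<in> W" "time_of z = time_of y1" "label_of z \<subseteq> label_of y1" "label_of y2 \<subseteq> label_of z"
    using z qle_iff by auto
  from qrelD[OF r1] obtain u1 where u1: "u1 \<in> wor M" "tp u1 (time_of x) = label_of x"
    "tp u1 (time_of x + 1) = label_of y1" and frame: "(time_of x, time_of y1) \<in> frame"
    and x: "x \<in> W" by blast
  from qrelD[OF r2] obtain u2 where u2: "u2 \<in> wor M" "tp u2 (time_of x) = label_of x"
    "tp u2 (time_of x + 1) = label_of y2" by blast
  have "label_of z \<in> types_at (time_of x + 1)" using frameD[OF frame] point_in_window[OF zz(1)] zz by simp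
  then obtain v where v: "v \<in> wor M" "tp v (time_of x + 1) = label_of z" by (auto simp: types_at_def)
  obtain w where w: "w \<in> wor M" "tp w (time_of x) = label_of x" "tp w (time_of x + 1) = label_of z"
    using tp_realised_between[OF u1(1) u2(1) v(1) u1(2) u2(2)] u1 u2 v zz by metis
  have "(x, z) \<in> qrel" using qrelI[OF x zz(1) _ w(1) w(2) w(3)] frame zz by simp
  then show "z \<in> qrel `` {x}" by blast
qed

lemma qrel_preimage_convex: "convex_set qle (qrel\<inverse> `` {y})"
  unfolding convex_set_def
proof (intro ballI allI impI)
  fix x1 x2 z assume "x1 \<in> qrel\<inverse> `` {y}" "x2 \<in> qrel\<inverse> `` {y}" and z: "(x1, z) \<in> qle \<and> (z, x2) \<in> qle"
  then have r1: "(x1, y) \<in> qrel" and r2: "(x2, y) \<in> qrel" by auto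
  have zz: "z \<in> W" "time_of z = time_of x1" "time_of x2 = time_of x1"
    "label_of z \<subseteq> label_of x1" "label_of x2 \<subseteq> label_of z"
    using z qle_iff by auto
  from qrelD[OF r1] obtain u1 where u1: "u1 \<in> wor M" "tp u1 (time_of x1) = label_of x1"
    "tp u1 (time_of x1 + 1) = label_of y" and frame: "(time_of x1, time_of y) \<in> frame"
    and y: "y \<in> W" by blast
  from qrelD[OF r2] obtain u2 where u2: "u2 \<in> wor M" "tp u2 (time_of x1) = label_of x2"
    "tp u2 (time_of x1 + 1) = label_of y" using zz(3) by auto
  have "label_of z \<in> types_at (time_of x1)" using point_in_window[OF zz(1)] zz by simp
  then obtain v where v: "v \<in> wor M" "tp v (time_of x1) = label_of z" by (auto simp: types_at_def)
  obtain w where w: "w \<in> wor M" "tp w (time_of x1 + 1) = label_of y" "tp w (time_of x1) = label_of z"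
    using tp_realised_between[OF u1(1) u2(1) v(1) u1(3) u2(3)] u1 u2 v zz by metis
  have "(z, y) \<in> qrel" using qrelI[OF zz(1) y _ w(1)] frame zz w by simp
  then show "z \<in> qrel\<inverse> `` {y}" by blast
qed

lemma sensible_qrel: "sensible (subf \<phi>) label_of qrel"
  unfolding sensible_def
proof (intro allI impI)
  fix x y assume "(x, y) \<in> qrel"
  then obtain w where "label_of x = tp w (time_of x)" "label_of y = tp w (time_of x + 1)"
    using qrelD by fastforce
  then show "(\<forall>a. Next a \<in> subf \<phi> \<longrightarrow> (Next a \<in> label_of x) = (a \<in> label_of y)) \<and>
    (\<forall>a. Prev a \<in> subf \<phi> \<longrightarrow> (Prev a \<in> label_of y) = (a \<in> label_of x)) \<and>
    (\<forall>a. Always a \<in> subf \<phi> \<longrightarrow> (Always a \<in> label_of x) = (a \<in> label_of x \<and> Always a \<in> label_of y)) \<and>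
    (\<forall>a. Hist a \<in> subf \<phi> \<longrightarrow> (Hist a \<in> label_of y) = (a \<in> label_of y \<and> Hist a \<in> label_of x)) \<and>
    (\<forall>a b. Until a b \<in> subf \<phi> \<longrightarrow>
       (Until a b \<in> label_of x) = (b \<in> label_of x \<or> a \<in> label_of x \<and> Until a b \<in> label_of y)) \<and>
    (\<forall>a b. Since a b \<in> subf \<phi> \<longrightarrow>
       (Since a b \<in> label_of y) = (b \<in> label_of y \<or> a \<in> label_of y \<and> Since a b \<in> label_of x))"
    by (auto simp: tp_Next tp_Prev tp_Always[of _ w "time_of x"] tp_Hist[of _ w "time_of x"]
        tp_Until[of _ _ w "time_of x"] tp_Since[of _ _ w "time_of x"] simp del: sat.simps)
qed

lemma omega_sensible_qrel: "omega_sensible (subf \<phi>) W label_of qrel"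
  unfolding omega_sensible_def
proof (intro ballI conjI allI impI)
  fix x a assume "x \<in> W" "Always a \<in> subf \<phi>" "Always a \<notin> label_of x"
  then show "\<exists>n v. (x, v) \<in> qrel ^^ n \<and> a \<notin> label_of v" using qrel_fulfilsF[of "Always a" x] by simp
next
  fix x a assume "x \<in> W" "Hist a \<in> subf \<phi>" "Hist a \<notin> label_of x"
  then show "\<exists>n v. (v, x) \<in> qrel ^^ n \<and> a \<notin> label_of v" using qrel_fulfilsB[of "Hist a" x] by simp
next
  fix x a b assume "x \<in> W" "Until a b \<in> label_of x"
  then show "\<exists>n v. (x, v) \<in> qrel ^^ n \<and> b \<in> label_of v"
    using qrel_fulfilsF[of "Until a b" x] label_subset by auto
next
  fix x a b assume "x \<in> W" "Since a b \<in> label_of x"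
  then show "\<exists>n v. (v, x) \<in> qrel ^^ n \<and> b \<in> label_of v"
    using qrel_fulfilsB[of "Since a b" x] label_subset by auto
qed

lemma quasimodel: "quasimodel (subf \<phi>) W qle label_of qrel"
  unfolding quasimodel_def
proof (intro conjI)
  show "qrel \<subseteq> W \<times> W" by (auto simp: qrel_def)
  show "bi_serial W qrel" unfolding bi_serial_def using qrel_serial qrel_coserial by blast
  show "fully_confluent qle qrel" unfolding fully_confluent_def
    using qrel_forth_down qrel_forth_up qrel_back_down qrel_back_up by blast
  show "convex_rel qle qrel" unfolding convex_rel_def
    using qrel_image_convex qrel_preimage_convex by blast
qed (fact labelled_space sensible_qrel omega_sensible_qrel)+

lemma height: "height_le W qle (card (subf \<phi>) + 1)"
  unfolding height_le_def
proof (intro allI impI)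
  fix xs assume xs: "set xs \<subseteq> W \<and> sorted_wrt (lt_in qle) xs"
  have decreasing: "card (label_of b) < card (label_of a)" if "lt_in qle a b" for a b
  proof -
    from that have ab: "a \<in> W" "b \<in> W" "time_of a = time_of b" "label_of b \<subseteq> label_of a" "a \<noteq> b"
      by (auto simp: lt_in_def qle_iff)
    then have "label_of b \<subset> label_of a" using point_eqI[of a b] by blast
    moreover have "finite (label_of a)" using label_subset[OF ab(1)] finite_subf by (rule finite_subset)
    ultimately show ?thesis by (rule psubset_card_mono[rotated])
  qed
  have "sorted_wrt (\<lambda>a b. card (label_of b) < card (label_of a)) xs"
    by (rule sorted_wrt_mono_rel[of xs "lt_in qle"]) (use xs decreasing in auto)
  moreover have "\<forall>x\<in>set xs. card (label_of x) \<le> card (subf \<phi>)"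
    using xs card_mono[OF finite_subf label_subset] by blast
  ultimately show "length xs \<le> card (subf \<phi>) + 1"
    using length_le_by_strictly_decreasing[of "\<lambda>x. card (label_of x)"] by simp
qed

lemma falsified: "w \<in> wor M \<Longrightarrow> \<not> sat M w t0 \<phi> \<Longrightarrow> \<exists>x\<in>W. \<phi> \<notin> label_of x"
proof -
  assume w: "w \<in> wor M" and "\<not> sat M w t0 \<phi>"
  then have "\<phi> \<notin> tp w 0" by (simp add: tp_def time_0)
  moreover obtain x where "x \<in> W" "label_of x = tp w 0"
    using point_at[of 0 w] window_bounds w by auto
  ultimately show ?thesis by auto
qed

text \<open>Shifting time by \<open>E - 1\<close> makes \<open>E - 1 \<rightarrow> C\<close> the left loop of the double lasso (with
  \<open>i' = 0\<close>) and \<open>B \<rightarrow> A\<close> the right one.\<close>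

lemma qrel_lasso:
  "(x, y) \<in> qrel \<Longrightarrow> (time_of x - (E - 1), time_of y - (E - 1))
     \<in> lasso_rel (nat (A - E + 1)) 0 (nat (B - A + 1)) (nat (E - C))"
  using window_bounds qrelD[of x y] unfolding frame_def lasso_rel_def by auto

lemma ultimately_periodic:
  assumes "wor M \<noteq> {}"
  shows "ultimately_periodic (subf \<phi>) W qle label_of qrel"
proof -
  let ?\<pi> = "\<lambda>x. time_of x - (E - 1)"
  let ?span = "{- (int 0 + int (nat (E - C)) - 1) .. int (nat (A - E + 1)) + int (nat (B - A + 1)) - 1}"
  have span: "?span = {C - (E - 1) .. B - (E - 1)}" using window_bounds by auto
  obtain w where w: "w \<in> wor M" using assms by blast
  have into: "\<forall>x\<in>W. ?\<pi> x \<in> ?span"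
    using point_in_window unfolding span by auto
  have onto: "\<forall>t\<in>?span. \<exists>x\<in>W. ?\<pi> x = t"
  proof
    fix t assume "t \<in> ?span"
    then have "C \<le> t + (E - 1)" "t + (E - 1) \<le> B" unfolding span by auto
    then obtain x where "x \<in> W" "time_of x = t + (E - 1)" using point_at w by blast
    then show "\<exists>x\<in>W. ?\<pi> x = t" by (intro bexI[of _ x]) auto
  qed
  have components: "\<forall>x\<in>W. {v \<in> W. ?\<pi> v = ?\<pi> x} = component W qle x"
    using component_eq by simp
  have "nat (B - A + 1) \<ge> 1" "nat (E - C) \<ge> 1" using window_bounds by auto
  then show ?thesis
    unfolding ultimately_periodic_def
    by (intro conjI quasimodel exI[of _ "nat (A - E + 1)"] exI[of _ "0::nat"]
        exI[of _ "nat (B - A + 1)"] exI[of _ "nat (E - C)"] exI[of _ ?\<pi>] into onto components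
        allI impI qrel_lasso)
qed

end

theorem theorem11p4:
  fixes \<phi> :: "'a fm" and M :: "('a, 'w, 't) bimodel"
  assumes "falsifiable_in M \<phi>"
  shows "\<exists>(W::nat set) le lab R.
           ultimately_periodic (subf \<phi>) W le lab R \<and>
           height_le W le (card (subf \<phi>) + 1) \<and>
           (\<exists>w\<in>W. \<phi> \<notin> lab w)"
proof -
  from assms obtain w0 t0 where "is_bimodel M" and w0: "w0 \<in> wor M" "\<not> sat M w0 t0 \<phi>"
    and "t0 \<in> tim M"
    unfolding falsifiable_in_def by blast
  then interpret bimodel_types M t0 \<phi> by unfold_locales
  obtain A B C E where "future_window A B" "past_window C E"
    using future_window_exists past_window_exists by blast
  let ?points = "{(t, L). C \<le> t \<and> t \<le> B \<and> L \<in> types_at t}"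
  obtain g where "bij_betw g {0..<card ?points} ?points"
    using ex_bij_betw_nat_finite[OF finite_window_types] by blast
  with \<open>future_window A B\<close> \<open>past_window C E\<close>
  interpret periodic_quotient M t0 \<phi> A B C E "{0..<card ?points}" "fst \<circ> g" "snd \<circ> g"
    by unfold_locales simp_all
  have "wor M \<noteq> {}" using w0 by blast
  then show ?thesis using ultimately_periodic height falsified[OF w0] by blast
qed

end
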